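(* Let $G$ be an undirected graph and $T\subseteq V(G)$ a set of terminals. Let $H$ be an edge-minimal 2-node-connected subgraph of $G$ with $T\subseteq V(H)$ (i.e., no proper subgraph of $H$ obtained by deleting edges is a 2-node-connected subgraph containing $T$). Then $H$ has an open ear decomposition $P_0,P_1,\dots,P_\ell$ such that (i) $P_0$ consists of a terminal, and every ear $P_i$, $i\in\{1,\dots,\ell\}$, contains a terminal as an internal node, i.e. $\mathrm{int}(P_i)\cap T\neq\emptyset$; and (ii) $|D_3(H)|\leq 2(|T|-2)$, where $D_3(H)$ is the set of nodes of degree at least $3$ in $H$.
   Context: A graph $H$ is 2-node-connected if $|V(H)|>2$ and $H-v$ is connected for every node $v$. An ear decomposition of a graph is a partition of its edge set into $P_0,P_1,\dots,P_\ell$ where $P_0$ is a trivial path with one node, and each $P_i$ ($i\geq1$) is either a path with both end nodes in $V_{i-1}=V(P_0)\cup\dots\cup V(P_{i-1})$ and no internal node in $V_{i-1}$ (an open ear), or a cycle with exactly one node in $V_{i-1}$ (a closed ear). $\mathrm{int}(P_i)=V(P_i)\setminus V_{i-1}$. The decomposition is open if all ears $P_2,\dots,P_\ell$ are open ($P_1$ is always closed). *)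

theory Defs
  imports Main
begin

definition graph :: "'a set \<Rightarrow> 'a set set \<Rightarrow> bool" where
  "graph V E \<longleftrightarrow> finite V \<and> (\<forall>e\<in>E. e \<subseteq> V \<and> card e = 2)"

definition subgraph :: "'a set \<Rightarrow> 'a set set \<Rightarrow> 'a set \<Rightarrow> 'a set set \<Rightarrow> bool" where
  "subgraph V' E' V E \<longleftrightarrow> V' \<subseteq> V \<and> E' \<subseteq> E \<and> (\<forall>e\<in>E'. e \<subseteq> V')"

definition adj :: "'a set \<Rightarrow> 'a set set \<Rightarrow> ('a \<times> 'a) set" where
  "adj V E = {(x, y). x \<in> V \<and> y \<in> V \<and> {x, y} \<in> E}"

definition connected_graph :: "'a set \<Rightarrow> 'a set set \<Rightarrow> bool" where
  "connected_graph V E \<longleftrightarrow> (\<forall>x\<in>V. \<forall>y\<in>V. (x, y) \<in> (adj V E)\<^sup>*)"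

definition two_node_connected :: "'a set \<Rightarrow> 'a set set \<Rightarrow> bool" where
  "two_node_connected V E \<longleftrightarrow>
     card V > 2 \<and> (\<forall>v\<in>V. connected_graph (V - {v}) {e\<in>E. v \<notin> e})"

definition degree :: "'a set set \<Rightarrow> 'a \<Rightarrow> nat" where
  "degree E v = card {e\<in>E. v \<in> e}"

text \<open>Ears are given as vertex sequences; the edges of an ear are the
consecutive pairs.\<close>

definition walk_edges :: "'a list \<Rightarrow> 'a set set" where
  "walk_edges xs = {{xs ! j, xs ! Suc j} | j. Suc j < length xs}"

text \<open>V_{i-1}: vertices of the ears P_0, ..., P_{i-1}.\<close>
definition ear_verts :: "'a list list \<Rightarrow> nat \<Rightarrow> 'a set" where
  "ear_verts Ps i = (\<Union>j<i. set (Ps ! j))"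

definition ear_int :: "'a list list \<Rightarrow> nat \<Rightarrow> 'a set" where
  "ear_int Ps i = set (Ps ! i) - ear_verts Ps i"

definition open_ear :: "'a set \<Rightarrow> 'a list \<Rightarrow> bool" where
  "open_ear W P \<longleftrightarrow> length P \<ge> 2 \<and> distinct P \<and> hd P \<in> W \<and> last P \<in> W
     \<and> set (butlast (tl P)) \<inter> W = {}"

text \<open>Closed ear: a cycle (at least 3 nodes, written with hd = last) with
exactly one node in W, namely its start node.\<close>
definition closed_ear :: "'a set \<Rightarrow> 'a list \<Rightarrow> bool" where
  "closed_ear W P \<longleftrightarrow> length P \<ge> 4 \<and> hd P = last P \<and> distinct (tl P)
     \<and> set P \<inter> W = {hd P}"

definition ear_decomposition :: "'a set \<Rightarrow> 'a set set \<Rightarrow> 'a list list \<Rightarrow> bool" where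
  "ear_decomposition V E Ps \<longleftrightarrow>
     Ps \<noteq> [] \<and> length (Ps ! 0) = 1
     \<and> (\<forall>i\<in>{1..<length Ps}. open_ear (ear_verts Ps i) (Ps ! i)
                                \<or> closed_ear (ear_verts Ps i) (Ps ! i))
     \<and> (\<forall>i<length Ps. \<forall>j<length Ps. i \<noteq> j \<longrightarrow> walk_edges (Ps ! i) \<inter> walk_edges (Ps ! j) = {})
     \<and> (\<Union>i<length Ps. walk_edges (Ps ! i)) = E
     \<and> (\<Union>i<length Ps. set (Ps ! i)) = V"

definition open_ear_decomposition :: "'a set \<Rightarrow> 'a set set \<Rightarrow> 'a list list \<Rightarrow> bool" where
  "open_ear_decomposition V E Ps \<longleftrightarrow>
     ear_decomposition V E Ps \<and> length Ps \<ge> 2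
     \<and> closed_ear (ear_verts Ps 1) (Ps ! 1)
     \<and> (\<forall>i\<in>{2..<length Ps}. open_ear (ear_verts Ps i) (Ps ! i))"

end

(* Starting from a cycle through two terminals, keep attaching an open ear through a terminal
   that is not yet covered. Such an ear exists because H is 2-node-connected: walking from the
   terminal towards the covered part W, an ear through each vertex of the walk is obtained from an
   ear through the next one by a detour in H minus that next vertex. The covered subgraph stays
   2-node-connected, and once it contains T, edge-minimality of H forces it to be all of H.
   Every ear P_0, ..., P_l owns a terminal not in the earlier ears, so l + 1 <= |T|; and a node
   of degree at least 3 must be an end of one of the open ears P_2, ..., P_l, whence
   |D_3(H)| <= 2 (l - 1) <= 2 (|T| - 2). *)
theory Submission
  imports Defs
begin

section \<open>Walks\<close>

lemma walk_edges_Nil [simp]: "walk_edges [] = {}"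
  by (simp add: walk_edges_def)

lemma walk_edges_single [simp]: "walk_edges [x] = {}"
  by (simp add: walk_edges_def)

lemma walk_edges_Cons_Cons [simp]:
  "walk_edges (x # y # xs) = insert {x, y} (walk_edges (y # xs))"
proof -
  have "{{(x # y # xs) ! j, (x # y # xs) ! Suc j} | j. Suc j < length (x # y # xs)}
      = insert {x, y} {{(y # xs) ! j, (y # xs) ! Suc j} | j. Suc j < length (y # xs)}"
    (is "?l = ?r")
  proof
    show "?l \<subseteq> ?r" by (auto simp: less_Suc_eq_0_disj)
    show "?r \<subseteq> ?l" by (auto intro: exI[of _ 0] exI[of _ "Suc _"])
  qed
  then show ?thesis by (simp add: walk_edges_def)
qed

lemma walk_edges_Cons: "xs \<noteq> [] \<Longrightarrow> walk_edges (x # xs) = insert {x, hd xs} (walk_edges xs)"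
  by (cases xs) auto

lemma walk_edges_append:
  "xs \<noteq> [] \<Longrightarrow> ys \<noteq> [] \<Longrightarrow>
     walk_edges (xs @ ys) = insert {last xs, hd ys} (walk_edges xs \<union> walk_edges ys)"
proof (induction xs)
  case (Cons x xs)
  then show ?case by (cases xs) (auto simp: walk_edges_Cons)
qed simp

lemma walk_edges_append_subset: "walk_edges xs \<union> walk_edges ys \<subseteq> walk_edges (xs @ ys)"
  by (cases "xs = [] \<or> ys = []") (auto simp: walk_edges_append)

lemma walk_edges_append_Cons:
  "walk_edges (xs @ y # ys) = walk_edges (xs @ [y]) \<union> walk_edges (y # ys)"
proof (induction xs)
  case (Cons x xs)
  then show ?case by (cases xs) auto
qed simp

lemma walk_edges_snoc: "xs \<noteq> [] \<Longrightarrow> walk_edges (xs @ [x]) = insert {last xs, x} (walk_edges xs)"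
  by (simp add: walk_edges_append)

lemma walk_edges_rev [simp]: "walk_edges (rev xs) = walk_edges xs"
proof (induction xs)
  case (Cons x xs)
  then show ?case
    by (cases "xs = []") (auto simp: walk_edges_snoc walk_edges_Cons last_rev insert_commute)
qed simp

lemma walk_edge_subset_set: "e \<in> walk_edges xs \<Longrightarrow> e \<subseteq> set xs"
  by (auto simp: walk_edges_def)

lemma finite_walk_edges: "finite (walk_edges xs)"
proof -
  have "walk_edges xs \<subseteq> (\<lambda>j. {xs ! j, xs ! Suc j}) ` {..<length xs}"
    by (auto simp: walk_edges_def)
  then show ?thesis by (rule finite_subset) simp
qed

section \<open>Paths and connectivity\<close>

lemma length_ge_2_obtain_hd_mid_last:
  assumes "length xs \<ge> 2"
  obtains a m b where "xs = a # m @ [b]"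
proof -
  obtain a xs' where "xs = a # xs'" using assms by (cases xs) auto
  moreover obtain m b where "xs' = m @ [b]" using assms \<open>xs = a # xs'\<close> by (cases xs' rule: rev_exhaust) auto
  ultimately show ?thesis using that by blast
qed

definition path_in :: "'a set \<Rightarrow> 'a set set \<Rightarrow> 'a list \<Rightarrow> bool" where
  "path_in V E P \<longleftrightarrow> P \<noteq> [] \<and> distinct P \<and> set P \<subseteq> V \<and> walk_edges P \<subseteq> E"

lemma sym_adj: "sym (adj V E)"
  by (auto simp: sym_def adj_def insert_commute)

lemma reachable_sym: "(x, y) \<in> (adj V E)\<^sup>* \<Longrightarrow> (y, x) \<in> (adj V E)\<^sup>*"
  using sym_adj sym_rtrancl by (metis symD)

lemma reachable_mono:
  "(x, y) \<in> (adj V E)\<^sup>* \<Longrightarrow> V \<subseteq> V' \<Longrightarrow> E \<subseteq> E' \<Longrightarrow> (x, y) \<in> (adj V' E')\<^sup>*"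
  by (rule rtrancl_mono[THEN subsetD, of "adj V E"]) (auto simp: adj_def)

lemma walk_reachable_hd:
  "walk_edges xs \<subseteq> E \<Longrightarrow> set xs \<subseteq> V \<Longrightarrow> x \<in> set xs \<Longrightarrow> (hd xs, x) \<in> (adj V E)\<^sup>*"
proof (induction xs)
  case (Cons y xs)
  show ?case
  proof (cases "x = y")
    case False
    then have "xs \<noteq> []" using Cons.prems by auto
    then have "walk_edges xs \<subseteq> E" using Cons.prems by (auto simp: walk_edges_Cons)
    then have "(hd xs, x) \<in> (adj V E)\<^sup>*" using Cons False by simp
    moreover have "(y, hd xs) \<in> adj V E"
      using Cons.prems \<open>xs \<noteq> []\<close> by (auto simp: adj_def walk_edges_Cons)
    ultimately show ?thesis by (simp add: converse_rtrancl_into_rtrancl)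
  qed simp
qed simp

lemma walk_reachable:
  assumes "walk_edges xs \<subseteq> E" "set xs \<subseteq> V" "x \<in> set xs" "y \<in> set xs"
  shows "(x, y) \<in> (adj V E)\<^sup>*"
  using walk_reachable_hd[OF assms(1,2)] assms(3,4) by (meson reachable_sym rtrancl_trans)

lemma connected_graphI_hub:
  "(\<And>x. x \<in> V \<Longrightarrow> (x, r) \<in> (adj V E)\<^sup>*) \<Longrightarrow> connected_graph V E"
  unfolding connected_graph_def by (meson reachable_sym rtrancl_trans)

lemma reachable_path_to_set:
  assumes "(x, y) \<in> (adj V E)\<^sup>*" "x \<in> V" "y \<in> S"
  shows "\<exists>P. path_in V E P \<and> hd P = x \<and> last P \<in> S \<and> set (butlast P) \<inter> S = {}"
  using assms
proof (induction rule: converse_rtrancl_induct)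
  case base
  then show ?case by (auto simp: path_in_def intro!: exI[of _ "[y]"])
next
  case (step x x')
  then have "x' \<in> V" and edge: "{x, x'} \<in> E" by (auto simp: adj_def)
  with step obtain P where P: "path_in V E P" "hd P = x'" "last P \<in> S" "set (butlast P) \<inter> S = {}"
    by blast
  show ?case
  proof (cases "x \<in> S")
    case True
    then show ?thesis using step by (auto simp: path_in_def intro!: exI[of _ "[x]"])
  next
    case xS: False
    show ?thesis
    proof (cases "x \<in> set P")
      case True
      then obtain P1 P2 where P12: "P = P1 @ x # P2" by (meson split_list)
      then have "path_in V E (x # P2)"
        using P(1) walk_edges_append_subset[of P1 "x # P2"] by (auto simp: path_in_def)
      moreover have "set (butlast (x # P2)) \<subseteq> set (butlast P)"
        using P12 by (auto simp: butlast_append)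
      moreover have "last (x # P2) = last P" using P12 by simp
      ultimately show ?thesis using P(3,4) by (intro exI[of _ "x # P2"]) auto
    next
      case False
      have "P \<noteq> []" using P(1) by (simp add: path_in_def)
      then have "path_in V E (x # P)"
        using P(1,2) False edge step.prems by (auto simp: path_in_def walk_edges_Cons)
      moreover have "last (x # P) = last P" "set (butlast (x # P)) = insert x (set (butlast P))"
        using \<open>P \<noteq> []\<close> by auto
      ultimately show ?thesis using P(3,4) xS by (intro exI[of _ "x # P"]) auto
    qed
  qed
qed

lemma card_gt_2_obtain_third:
  assumes "card V > 2"
  obtains z where "z \<in> V" "z \<noteq> x" "z \<noteq> y"
proof -
  have "card {x, y} \<le> 2" by (simp add: card_insert_if)
  then have "card (V - {x, y}) \<noteq> 0"
    using assms diff_card_le_card_Diff[of "{x, y}" V] by simp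
  then obtain z where "z \<in> V - {x, y}" by (metis card.empty ex_in_conv)
  then show ?thesis using that by blast
qed

lemma two_node_connected_imp_connected:
  assumes "two_node_connected V E"
  shows "connected_graph V E"
  unfolding connected_graph_def
proof (intro ballI)
  fix x y assume xy: "x \<in> V" "y \<in> V"
  obtain w where w: "w \<in> V" "w \<noteq> x" "w \<noteq> y"
    using assms card_gt_2_obtain_third[of V x y] by (auto simp: two_node_connected_def)
  then have "(x, y) \<in> (adj (V - {w}) {e\<in>E. w \<notin> e})\<^sup>*"
    using assms xy by (simp add: two_node_connected_def connected_graph_def)
  then show "(x, y) \<in> (adj V E)\<^sup>*" by (rule reachable_mono) auto
qed

lemma two_node_connected_delete:
  assumes "two_node_connected V E"
  shows "connected_graph (V - {v}) {e\<in>E. v \<notin> e}"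
proof (cases "v \<in> V")
  case False
  then have "adj (V - {v}) {e\<in>E. v \<notin> e} = adj V E" by (auto simp: adj_def)
  then show ?thesis
    using False two_node_connected_imp_connected[OF assms] by (simp add: connected_graph_def)
qed (use assms in \<open>simp add: two_node_connected_def\<close>)

lemma two_node_connected_neighbor:
  assumes "two_node_connected V E" "u \<in> V" "w \<in> V" "u \<noteq> w"
  obtains z where "{u, z} \<in> E" "z \<in> V" "z \<noteq> u" "z \<noteq> w"
proof -
  obtain y where y: "y \<in> V" "y \<noteq> u" "y \<noteq> w"
    using assms(1) card_gt_2_obtain_third[of V u w] by (auto simp: two_node_connected_def)
  have "(u, y) \<in> (adj (V - {w}) {e\<in>E. w \<notin> e})\<^sup>*"
    using two_node_connected_delete[OF assms(1), of w] assms y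
    by (simp add: connected_graph_def)
  then obtain P where P: "path_in (V - {w}) {e\<in>E. w \<notin> e} P" "hd P = u" "last P = y"
    using reachable_path_to_set[of u y _ _ "{y}"] assms by blast
  then obtain z P' where "P = u # z # P'"
    using y(2) by (cases P rule: remdups_adj.cases) (auto simp: path_in_def)
  then show ?thesis using P(1) that by (auto simp: path_in_def)
qed

section \<open>Two-node-connectivity of cycles and ear extensions\<close>

lemma walk_connected: "walk_edges L \<subseteq> E \<Longrightarrow> connected_graph (set L) E"
  unfolding connected_graph_def using walk_reachable[of L E "set L"] by blast

lemma walk_edges_avoid: "v \<notin> set L \<Longrightarrow> walk_edges L \<subseteq> E \<Longrightarrow> walk_edges L \<subseteq> {e\<in>E. v \<notin> e}"
  using walk_edge_subset_set by fastforce

lemma reachable_in_vertices: "(x, w) \<in> (adj V E)\<^sup>* \<Longrightarrow> x \<noteq> w \<Longrightarrow> w \<in> V"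
  by (induction rule: rtrancl_induct) (auto simp: adj_def)

text \<open>Deleting a vertex splits a path into at most two pieces, each containing an end.\<close>
lemma path_delete_reaches_end:
  assumes "distinct L" "walk_edges L \<subseteq> E" "set L \<subseteq> V" "x \<in> set L" "x \<noteq> v"
  defines "R \<equiv> adj (V - {v}) {e\<in>E. v \<notin> e}"
  shows "(x, hd L) \<in> R\<^sup>* \<or> (x, last L) \<in> R\<^sup>*"
proof (cases "v \<in> set L")
  case False
  then have "walk_edges L \<subseteq> {e\<in>E. v \<notin> e}" using assms(2) by (rule walk_edges_avoid)
  then have "(x, hd L) \<in> R\<^sup>*"
    unfolding R_def using False assms(3,4) by (intro walk_reachable) (auto intro: hd_in_set)
  then show ?thesis ..
next
  case True
  then obtain L1 L2 where L: "L = L1 @ v # L2" by (meson split_list)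
  then have "v \<notin> set L1" "v \<notin> set L2" using assms(1) by auto
  have "walk_edges L1 \<subseteq> E" "walk_edges L2 \<subseteq> E"
    using assms(2) walk_edges_append_subset[of L1 "v # L2"] walk_edges_append_subset[of "[v]" L2]
    unfolding L by auto
  then have E12: "walk_edges L1 \<subseteq> {e\<in>E. v \<notin> e}" "walk_edges L2 \<subseteq> {e\<in>E. v \<notin> e}"
    using \<open>v \<notin> set L1\<close> \<open>v \<notin> set L2\<close> by (simp_all add: walk_edges_avoid)
  have "x \<in> set L1 \<or> x \<in> set L2" using assms(4,5) L by auto
  then show ?thesis
  proof
    assume "x \<in> set L1"
    then have "(x, hd L1) \<in> R\<^sup>*"
      unfolding R_def using \<open>v \<notin> set L1\<close> E12(1) assms(3) L
      by (intro walk_reachable) (auto intro: hd_in_set)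
    then show ?thesis using \<open>x \<in> set L1\<close> L by (auto simp: hd_append)
  next
    assume "x \<in> set L2"
    then have "(x, last L2) \<in> R\<^sup>*"
      unfolding R_def using \<open>v \<notin> set L2\<close> E12(2) assms(3) L
      by (intro walk_reachable) (auto intro: last_in_set)
    then show ?thesis using \<open>x \<in> set L2\<close> L by auto
  qed
qed

lemma cycle_delete_vertex_walk:
  assumes "t \<notin> set M" "distinct M" "v \<in> set (t # M @ [t])"
  shows "\<exists>L. set L = set (t # M @ [t]) - {v} \<and> walk_edges L \<subseteq> walk_edges (t # M @ [t])"
proof (cases "v = t")
  case True
  then have "set M = set (t # M @ [t]) - {v}" using assms(1) by auto
  moreover have "walk_edges M \<subseteq> walk_edges (t # M @ [t])"
    using walk_edges_append_subset[of "[t]" "M @ [t]"] walk_edges_append_subset[of M "[t]"] by auto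
  ultimately show ?thesis by blast
next
  case False
  then obtain M1 M2 where M: "M = M1 @ v # M2" using assms(3) by (auto dest: split_list)
  then have "set (M2 @ t # M1) = set (t # M @ [t]) - {v}" using assms(1,2) False by auto
  moreover have "walk_edges (t # M1) \<union> walk_edges (M2 @ [t]) \<subseteq> walk_edges (t # M @ [t])"
    using walk_edges_append_Cons[of "t # M1" v "M2 @ [t]"] M
      walk_edges_append_subset[of "t # M1" "[v]"] walk_edges_append_subset[of "[v]" "M2 @ [t]"]
    by auto
  then have "walk_edges (M2 @ t # M1) \<subseteq> walk_edges (t # M @ [t])"
    using walk_edges_append_Cons[of M2 t M1] by auto
  ultimately show ?thesis by blast
qed

lemma two_node_connected_cycle:
  assumes "length C \<ge> 4" "hd C = last C" "distinct (tl C)"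
  shows "two_node_connected (set C) (walk_edges C)"
proof -
  have "length C \<ge> 2" using assms(1) by simp
  then obtain t M b where C: "C = t # M @ [b]" by (rule length_ge_2_obtain_hd_mid_last)
  have "b = t" using assms(2) C by simp
  then have "distinct (M @ [t])" using assms(3) C by simp
  then have "t \<notin> set M" "distinct M" by simp_all
  have "length M \<ge> 2" using assms(1) C by simp
  show ?thesis
    unfolding two_node_connected_def C \<open>b = t\<close>
  proof (intro conjI ballI)
    show "card (set (t # M @ [t])) > 2"
      using \<open>t \<notin> set M\<close> \<open>distinct M\<close> \<open>length M \<ge> 2\<close> by (simp add: insert_absorb distinct_card)
    fix v assume "v \<in> set (t # M @ [t])"
    then obtain L where L: "set L = set (t # M @ [t]) - {v}" "walk_edges L \<subseteq> walk_edges (t # M @ [t])"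
      using cycle_delete_vertex_walk[OF \<open>t \<notin> set M\<close> \<open>distinct M\<close>] by blast
    then have "walk_edges L \<subseteq> {e \<in> walk_edges (t # M @ [t]). v \<notin> e}"
      using walk_edges_avoid[of v L] by auto
    then show "connected_graph (set (t # M @ [t]) - {v}) {e \<in> walk_edges (t # M @ [t]). v \<notin> e}"
      using walk_connected L(1) by metis
  qed
qed

lemma two_node_connected_add_ear:
  assumes tnc: "two_node_connected V E" and ear: "open_ear V P"
  shows "two_node_connected (V \<union> set P) (E \<union> walk_edges P)"
  unfolding two_node_connected_def
proof (intro conjI ballI)
  have "finite V" "card V > 2" using tnc by (auto simp: two_node_connected_def intro: card_ge_0_finite)
  then show "card (V \<union> set P) > 2" by (meson card_mono finite_Un finite_set less_le_trans sup_ge1)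
  fix v
  let ?R = "adj (V \<union> set P - {v}) {e \<in> E \<union> walk_edges P. v \<notin> e}"
  obtain r where r: "r \<in> V" "r \<noteq> v" using \<open>card V > 2\<close> card_gt_2_obtain_third by metis
  have old: "(x, r) \<in> ?R\<^sup>*" if "x \<in> V - {v}" for x
  proof -
    have "(x, r) \<in> (adj (V - {v}) {e\<in>E. v \<notin> e})\<^sup>*"
      using two_node_connected_delete[OF tnc, of v] that r by (simp add: connected_graph_def)
    then show ?thesis by (rule reachable_mono) auto
  qed
  have "(x, r) \<in> ?R\<^sup>*" if x: "x \<in> V \<union> set P - {v}" for x
  proof (cases "x \<in> V")
    case False
    have ends: "hd P \<in> V" "last P \<in> V" and "distinct P" using ear by (auto simp: open_ear_def)
    then have "(x, hd P) \<in> ?R\<^sup>* \<or> (x, last P) \<in> ?R\<^sup>*"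
      using x False by (intro path_delete_reaches_end) auto
    then obtain w where "w \<in> V" "(x, w) \<in> ?R\<^sup>*" using ends by blast
    moreover from this have "w \<noteq> v" using False reachable_in_vertices by fastforce
    ultimately show ?thesis using old by (meson DiffI rtrancl_trans singletonD)
  qed (use old x in auto)
  then show "connected_graph (V \<union> set P - {v}) {e \<in> E \<union> walk_edges P. v \<notin> e}"
    by (rule connected_graphI_hub)
qed

section \<open>An open ear through a given vertex\<close>

lemma open_ear_iff:
  "open_ear W P \<longleftrightarrow> length P \<ge> 2 \<and> distinct P \<and> hd P \<in> W \<and> last P \<in> W
     \<and> (\<forall>x\<in>set P. x \<in> W \<longrightarrow> x = hd P \<or> x = last P)"
proof (cases "length P \<ge> 2")
  case True
  then obtain a m b where "P = a # m @ [b]" by (rule length_ge_2_obtain_hd_mid_last)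
  then show ?thesis by (auto simp: open_ear_def)
qed (simp add: open_ear_def)

lemma open_ear_hd_neq_last: "open_ear W P \<Longrightarrow> hd P \<noteq> last P"
  by (cases P) (auto simp: open_ear_def)

definition ear_through :: "'a set \<Rightarrow> 'a set set \<Rightarrow> 'a set \<Rightarrow> 'a \<Rightarrow> 'a list \<Rightarrow> bool" where
  "ear_through V E X t P \<longleftrightarrow> open_ear X P \<and> set P \<subseteq> V \<and> walk_edges P \<subseteq> E \<and> t \<in> set P"

lemma ear_through_rev: "ear_through V E X t P \<Longrightarrow> ear_through V E X t (rev P)"
  by (auto simp: ear_through_def open_ear_iff hd_rev last_rev)

lemma ear_through_start:
  assumes tnc: "two_node_connected V E" and edge: "{t, x} \<in> E"
    and X: "X \<subseteq> V" and t: "t \<in> V" "t \<notin> X" and x: "x \<in> X" and x': "x' \<in> X" "x' \<noteq> x"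
  shows "\<exists>P. ear_through V E X t P"
proof -
  have "t \<in> V - {x}" "x' \<in> X - {x}" using t x x' by auto
  moreover have "(t, x') \<in> (adj (V - {x}) {e\<in>E. x \<notin> e})\<^sup>*"
    using two_node_connected_delete[OF tnc, of x] X t x x' by (auto simp: connected_graph_def)
  ultimately obtain Q where Q: "path_in (V - {x}) {e\<in>E. x \<notin> e} Q" "hd Q = t" "last Q \<in> X - {x}"
      "set (butlast Q) \<inter> (X - {x}) = {}"
    using reachable_path_to_set[of t x' "V - {x}" _ "X - {x}"] by blast
  obtain Qb z where Qb: "Q = Qb @ [z]"
    using Q(1) by (cases Q rule: rev_exhaust) (auto simp: path_in_def)
  have "ear_through V E X t (x # Q)"
    unfolding ear_through_def open_ear_iff
  proof (intro conjI)
    show "length (x # Q) \<ge> 2" "distinct (x # Q)" "set (x # Q) \<subseteq> V"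
      using Q(1) X x t by (auto simp: path_in_def Suc_le_eq)
    show "\<forall>y\<in>set (x # Q). y \<in> X \<longrightarrow> y = hd (x # Q) \<or> y = last (x # Q)"
      using Q(3,4) unfolding Qb by auto
    show "walk_edges (x # Q) \<subseteq> E"
      using Q edge by (auto simp: path_in_def walk_edges_Cons insert_commute)
    show "hd (x # Q) \<in> X" using x by simp
    show "last (x # Q) \<in> X" using Q(3) Qb by simp
    have "Q \<noteq> []" using Qb by simp
    then show "t \<in> set (x # Q)" using Q(2) hd_in_set by fastforce
  qed
  then show ?thesis by blast
qed

text \<open>The new ear runs along the old one up to y, then along Q to z = last Q, and on along the
  old ear: the segment strictly between y and z is bypassed.\<close>
lemma ear_through_detour:
  assumes P: "ear_through V E X y (P1 @ y # P2)" and y: "y \<notin> X" and edge: "{y, t} \<in> E"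
    and Q: "path_in V E Q" "hd Q = t" "last Q \<in> set P2" "y \<notin> set Q"
      "set (butlast Q) \<inter> set (P1 @ y # P2) = {}" "set (butlast Q) \<inter> X = {}"
  shows "\<exists>P'. ear_through V E X t P'"
proof -
  obtain Qb z where Qb: "Q = Qb @ [z]"
    using Q(1) by (cases Q rule: rev_exhaust) (auto simp: path_in_def)
  obtain P21 P22 where P2: "P2 = P21 @ z # P22" using Q(3) Qb by (auto dest: split_list)
  let ?P = "P1 @ y # P2" and ?P' = "P1 @ y # Qb @ z # P22"
  have earP: "open_ear X ?P" "set ?P \<subseteq> V" "walk_edges ?P \<subseteq> E"
    using P by (auto simp: ear_through_def)
  then have "distinct ?P" and ends: "\<forall>x\<in>set ?P. x \<in> X \<longrightarrow> x = hd ?P \<or> x = last ?P"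
    by (auto simp: open_ear_iff)
  have "P1 \<noteq> []" using earP(1) y by (auto simp: open_ear_def)
  have Qb_disj: "set Qb \<inter> set ?P = {}" "set Qb \<inter> X = {}" using Q(5,6) Qb by auto
  have hd': "hd ?P' = hd ?P" and last': "last ?P' = last ?P"
    using \<open>P1 \<noteq> []\<close> P2 by auto
  have "ear_through V E X t ?P'"
    unfolding ear_through_def open_ear_iff
  proof (intro conjI)
    show "length ?P' \<ge> 2" by simp
    show "distinct ?P'"
      using \<open>distinct ?P\<close> Qb_disj(1) Q(1) Qb P2 by (auto simp: path_in_def)
    show "hd ?P' \<in> X" "last ?P' \<in> X" using earP(1) hd' last' by (auto simp: open_ear_def)
    show "\<forall>x\<in>set ?P'. x \<in> X \<longrightarrow> x = hd ?P' \<or> x = last ?P'"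
      using ends Qb_disj(2) y P2 hd' last' by auto
    show "set ?P' \<subseteq> V" using earP(2) Q(1) Qb P2 by (auto simp: path_in_def)
    have "walk_edges (P1 @ [y]) \<subseteq> E" "walk_edges (z # P22) \<subseteq> E"
      using earP(3) walk_edges_append_Cons[of P1 y P2] P2
        walk_edges_append_subset[of "y # P21" "z # P22"] by auto
    moreover have "walk_edges (y # Qb @ [z]) \<subseteq> E"
      using Q(1,2) edge Qb by (auto simp: path_in_def walk_edges_Cons)
    ultimately show "walk_edges ?P' \<subseteq> E"
      using walk_edges_append_Cons[of P1 y "Qb @ z # P22"]
        walk_edges_append_Cons[of "y # Qb" z P22] by auto
    show "t \<in> set ?P'" using Q(2) Qb by (cases Qb) auto
  qed
  then show ?thesis by blast
qed

text \<open>The new ear runs along the old one up to y and then along Q to a new end in X.\<close>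
lemma ear_through_exit:
  assumes P: "ear_through V E X y (P1 @ y # P2)" and y: "y \<notin> X" and edge: "{y, t} \<in> E"
    and Q: "path_in V E Q" "hd Q = t" "last Q \<in> X" "set Q \<inter> set (P1 @ y # P2) = {}"
      "set (butlast Q) \<inter> X = {}"
  shows "\<exists>P'. ear_through V E X t P'"
proof -
  obtain Qb z where Qb: "Q = Qb @ [z]"
    using Q(1) by (cases Q rule: rev_exhaust) (auto simp: path_in_def)
  let ?P = "P1 @ y # P2" and ?P' = "P1 @ y # Qb @ [z]"
  have earP: "open_ear X ?P" "set ?P \<subseteq> V" "walk_edges ?P \<subseteq> E"
    using P by (auto simp: ear_through_def)
  then have "distinct ?P" and ends: "\<forall>x\<in>set ?P. x \<in> X \<longrightarrow> x = hd ?P \<or> x = last ?P"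
    by (auto simp: open_ear_iff)
  have "P1 \<noteq> []" "P2 \<noteq> []" using earP(1) y by (auto simp: open_ear_def)
  have "last ?P \<notin> set P1" using \<open>distinct ?P\<close> \<open>P2 \<noteq> []\<close> by (auto simp: last_in_set)
  have "ear_through V E X t ?P'"
    unfolding ear_through_def open_ear_iff
  proof (intro conjI)
    show "length ?P' \<ge> 2" by simp
    show "distinct ?P'"
      using \<open>distinct ?P\<close> Q(1,4) Qb by (auto simp: path_in_def)
    show "hd ?P' \<in> X" "last ?P' \<in> X" using earP(1) Q(3) Qb \<open>P1 \<noteq> []\<close> by (auto simp: open_ear_def)
    show "\<forall>x\<in>set ?P'. x \<in> X \<longrightarrow> x = hd ?P' \<or> x = last ?P'"
      using ends Q(5) Qb y \<open>P1 \<noteq> []\<close> \<open>last ?P \<notin> set P1\<close> by auto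
    show "set ?P' \<subseteq> V" using earP(2) Q(1) Qb by (auto simp: path_in_def)
    have "walk_edges (P1 @ [y]) \<subseteq> E"
      using earP(3) walk_edges_append_Cons[of P1 y P2] by auto
    moreover have "walk_edges (y # Qb @ [z]) \<subseteq> E"
      using Q(1,2) edge Qb by (auto simp: path_in_def walk_edges_Cons)
    ultimately show "walk_edges ?P' \<subseteq> E"
      using walk_edges_append_Cons[of P1 y "Qb @ [z]"] by auto
    show "t \<in> set ?P'" using Q(2) Qb by (cases Qb) auto
  qed
  then show ?thesis by blast
qed

lemma ear_through_avoiding_path:
  assumes tnc: "two_node_connected V E" and y: "y \<notin> X" and P: "ear_through V E X y P"
    and t: "t \<in> V" "t \<notin> set P"
  shows "\<exists>Q. path_in V E Q \<and> hd Q = t \<and> y \<notin> set Q \<and> last Q \<in> set P \<union> X - {y}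
           \<and> set (butlast Q) \<inter> (set P \<union> X) = {}"
proof -
  let ?S = "set P \<union> X - {y}"
  have hdP: "hd P \<in> X" "hd P \<in> set P" and "set P \<subseteq> V" "y \<in> set P"
    using P by (auto simp: ear_through_def open_ear_def intro: hd_in_set)
  then have tV: "t \<in> V - {y}" and "hd P \<in> ?S" using t y by auto
  moreover have "(t, hd P) \<in> (adj (V - {y}) {e\<in>E. y \<notin> e})\<^sup>*"
    using two_node_connected_delete[OF tnc, of y] \<open>set P \<subseteq> V\<close> hdP y tV
    by (auto simp: connected_graph_def)
  ultimately obtain Q where Q: "path_in (V - {y}) {e\<in>E. y \<notin> e} Q" "hd Q = t" "last Q \<in> ?S"
      "set (butlast Q) \<inter> ?S = {}"
    using reachable_path_to_set[of t "hd P" "V - {y}" _ ?S] by blast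
  then have "path_in V E Q" and "y \<notin> set Q" by (auto simp: path_in_def)
  moreover from this have "set (butlast Q) \<inter> (set P \<union> X) = {}"
    using Q(4) in_set_butlastD by fastforce
  ultimately show ?thesis using Q(2,3) by blast
qed

lemma ear_through_step:
  assumes tnc: "two_node_connected V E" and edge: "{y, t} \<in> E"
    and t: "t \<in> V" and y: "y \<notin> X" and P: "ear_through V E X y P"
  shows "\<exists>P'. ear_through V E X t P'"
proof (cases "t \<in> set P")
  case True
  then show ?thesis using P by (auto simp: ear_through_def)
next
  case False
  obtain P1 P2 where P12: "P = P1 @ y # P2" using P by (auto simp: ear_through_def dest: split_list)
  obtain Q where pQ: "path_in V E Q" and Q: "hd Q = t" "y \<notin> set Q" "last Q \<in> set P \<union> X - {y}"
    and bQ: "set (butlast Q) \<inter> (set P \<union> X) = {}"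
    using ear_through_avoiding_path[OF tnc y P t False] by blast
  consider "last Q \<in> set P2" | "last Q \<in> set P1" | "last Q \<in> X - set P"
    using Q(3) P12 by auto
  then show ?thesis
  proof cases
    case 1
    then show ?thesis
      using ear_through_detour[OF P[unfolded P12] y edge pQ Q(1) _ Q(2)] bQ P12 by auto
  next
    case 2
    have "ear_through V E X y (rev P2 @ y # rev P1)"
      using ear_through_rev[OF P] P12 by simp
    moreover have "last Q \<in> set (rev P1)" "set (butlast Q) \<inter> set (rev P2 @ y # rev P1) = {}"
      "set (butlast Q) \<inter> X = {}"
      using bQ P12 2 by auto
    ultimately show ?thesis
      using ear_through_detour[OF _ y edge pQ Q(1) _ Q(2)] by blast
  next
    case 3
    obtain Qb z where "Q = Qb @ [z]"
      using pQ by (cases Q rule: rev_exhaust) (auto simp: path_in_def)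
    then have "set Q \<inter> set P = {}" using bQ 3 by auto
    then show ?thesis
      using ear_through_exit[OF P[unfolded P12] y edge pQ Q(1)] bQ P12 3 by auto
  qed
qed

lemma ear_through_along_path:
  assumes tnc: "two_node_connected V E" and X: "X \<subseteq> V" "x1 \<in> X" "x2 \<in> X" "x1 \<noteq> x2"
  shows "path_in V E P \<Longrightarrow> hd P \<notin> X \<Longrightarrow> last P \<in> X \<Longrightarrow> set (butlast P) \<inter> X = {}
    \<Longrightarrow> \<exists>P'. ear_through V E X (hd P) P'"
proof (induction P)
  case (Cons t P)
  then have "P \<noteq> []" by auto
  then have edge: "{t, hd P} \<in> E" and "t \<in> V" and pP: "path_in V E P"
    using Cons.prems(1) by (auto simp: path_in_def walk_edges_Cons)
  show ?case
  proof (cases "hd P \<in> X")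
    case True
    obtain x' where "x' \<in> X" "x' \<noteq> hd P" using X by blast
    then show ?thesis
      using ear_through_start[OF tnc edge X(1) \<open>t \<in> V\<close> _ True] Cons.prems(2) by auto
  next
    case False
    then obtain P' where "ear_through V E X (hd P) P'"
      using Cons.IH[OF pP] Cons.prems(3,4) \<open>P \<noteq> []\<close> by auto
    then show ?thesis
      using ear_through_step[OF tnc _ \<open>t \<in> V\<close> False] edge by (auto simp: insert_commute)
  qed
qed (simp add: path_in_def)

lemma ear_through_exists:
  assumes tnc: "two_node_connected V E" and X: "X \<subseteq> V" "x1 \<in> X" "x2 \<in> X" "x1 \<noteq> x2"
    and t: "t \<in> V" "t \<notin> X"
  shows "\<exists>P. ear_through V E X t P"
proof -
  have "(t, x1) \<in> (adj V E)\<^sup>*"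
    using two_node_connected_imp_connected[OF tnc] t X by (auto simp: connected_graph_def)
  then obtain P where "path_in V E P" "hd P = t" "last P \<in> X" "set (butlast P) \<inter> X = {}"
    using reachable_path_to_set[of t x1 V E X] t X by blast
  then show ?thesis using ear_through_along_path[OF tnc X] t by blast
qed

section \<open>Growing an ear decomposition through the terminals\<close>

definition ear_edges :: "'a list list \<Rightarrow> 'a set set" where
  "ear_edges Ps = (\<Union>i<length Ps. walk_edges (Ps ! i))"

lemma ear_verts_snoc_le: "i \<le> length Ps \<Longrightarrow> ear_verts (Ps @ [P]) i = ear_verts Ps i"
  by (auto simp: ear_verts_def nth_append)

lemma ear_verts_snoc: "ear_verts (Ps @ [P]) (Suc (length Ps)) = ear_verts Ps (length Ps) \<union> set P"
  using ear_verts_snoc_le[of "length Ps" Ps P] by (simp add: ear_verts_def lessThan_Suc Un_commute)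

lemma ear_edges_snoc: "ear_edges (Ps @ [P]) = ear_edges Ps \<union> walk_edges P"
  by (simp add: ear_edges_def lessThan_Suc nth_append Un_commute)

lemma set_subset_ear_verts: "i < j \<Longrightarrow> set (Ps ! i) \<subseteq> ear_verts Ps j"
  by (auto simp: ear_verts_def)

lemma ear_edge_subset_ear_verts: "e \<in> ear_edges Ps \<Longrightarrow> e \<subseteq> ear_verts Ps (length Ps)"
  by (auto simp: ear_edges_def ear_verts_def dest: walk_edge_subset_set)

text \<open>An ear through a vertex outside W has an inner vertex on each of its edges.\<close>
lemma open_ear_edge_not_subset:
  assumes "open_ear W P" "x \<in> set P" "x \<notin> W" "e \<in> walk_edges P"
  shows "\<not> e \<subseteq> W"
proof
  assume "e \<subseteq> W"
  have "length P \<ge> 2" using assms(1) by (simp add: open_ear_def)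
  then obtain a m b where P: "P = a # m @ [b]" by (rule length_ge_2_obtain_hd_mid_last)
  have "set m \<inter> W = {}" "m \<noteq> []" using assms(1-3) P by (auto simp: open_ear_def)
  then have "walk_edges P = insert {a, hd m} (insert {last m, b} (walk_edges m))"
    using P by (simp add: walk_edges_Cons walk_edges_snoc)
  moreover have "hd m \<in> set m" "last m \<in> set m" using \<open>m \<noteq> []\<close> by auto
  moreover have "\<exists>x\<in>set m. x \<in> e" if "e \<in> walk_edges m"
    using that by (auto simp: walk_edges_def)
  ultimately have "\<exists>x\<in>set m. x \<in> e" using assms(4) by auto
  then show False using \<open>e \<subseteq> W\<close> \<open>set m \<inter> W = {}\<close> by blast
qed

lemma open_ear_decomposition_snoc:
  assumes D: "open_ear_decomposition (ear_verts Ps (length Ps)) (ear_edges Ps) Ps"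
    and P: "open_ear (ear_verts Ps (length Ps)) P"
    and new: "\<forall>e\<in>walk_edges P. \<not> e \<subseteq> ear_verts Ps (length Ps)"
  shows "open_ear_decomposition (ear_verts (Ps @ [P]) (length (Ps @ [P]))) (ear_edges (Ps @ [P])) (Ps @ [P])"
proof -
  let ?Q = "Ps @ [P]"
  have L: "length Ps \<ge> 2" and P0: "length (Ps ! 0) = 1"
    and P1: "closed_ear (ear_verts Ps 1) (Ps ! 1)"
    and opens: "\<forall>i\<in>{2..<length Ps}. open_ear (ear_verts Ps i) (Ps ! i)"
    and disj: "\<forall>i<length Ps. \<forall>j<length Ps. i \<noteq> j \<longrightarrow> walk_edges (Ps ! i) \<inter> walk_edges (Ps ! j) = {}"
    using D by (simp_all add: open_ear_decomposition_def ear_decomposition_def)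
  have nth: "i < length Ps \<Longrightarrow> ?Q ! i = Ps ! i" for i by (simp add: nth_append)
  have verts: "i \<le> length Ps \<Longrightarrow> ear_verts ?Q i = ear_verts Ps i" for i by (rule ear_verts_snoc_le)
  have P1': "closed_ear (ear_verts ?Q 1) (?Q ! 1)" using P1 L nth verts by simp
  have opens': "\<forall>i\<in>{2..<length ?Q}. open_ear (ear_verts ?Q i) (?Q ! i)"
  proof
    fix i assume "i \<in> {2..<length ?Q}"
    then consider "i \<in> {2..<length Ps}" | "i = length Ps" by fastforce
    then show "open_ear (ear_verts ?Q i) (?Q ! i)"
      by cases (use opens nth verts P in auto)
  qed
  have new_disj: "walk_edges (Ps ! k) \<inter> walk_edges P = {}" if "k < length Ps" for k
  proof -
    have "e \<subseteq> ear_verts Ps (length Ps)" if "e \<in> walk_edges (Ps ! k)" for e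
      using walk_edge_subset_set[OF that] set_subset_ear_verts[OF \<open>k < length Ps\<close>] by (rule subset_trans)
    then show ?thesis using new by blast
  qed
  have disj': "walk_edges (?Q ! i) \<inter> walk_edges (?Q ! j) = {}"
    if ij: "i < length ?Q" "j < length ?Q" "i \<noteq> j" for i j
  proof -
    consider "i < length Ps" "j < length Ps" | "i = length Ps" "j < length Ps" | "j = length Ps" "i < length Ps"
      using ij by fastforce
    then show ?thesis
      by cases (use disj nth new_disj ij in \<open>simp_all add: Int_commute\<close>)
  qed
  show ?thesis
    unfolding open_ear_decomposition_def ear_decomposition_def
  proof (intro conjI ballI allI impI)
    show "length (?Q ! 0) = 1" using P0 L by (auto simp: nth_append)
    fix i assume "i \<in> {1..<length ?Q}"
    then show "open_ear (ear_verts ?Q i) (?Q ! i) \<or> closed_ear (ear_verts ?Q i) (?Q ! i)"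
      using P1' opens' by (cases "i = 1") auto
  qed (use L P1' opens' disj' in \<open>auto simp: ear_verts_def ear_edges_def\<close>)
qed

lemma ear_int_snoc_less: "i < length Ps \<Longrightarrow> ear_int (Ps @ [P]) i = ear_int Ps i"
  by (simp add: ear_int_def ear_verts_snoc_le nth_append)

lemma ear_int_snoc: "ear_int (Ps @ [P]) (length Ps) = set P - ear_verts Ps (length Ps)"
  by (simp add: ear_int_def ear_verts_snoc_le)

text \<open>An ear through t1 with ends t0 and a neighbour w of t0, closed by the edge {w, t0}.\<close>
lemma two_node_connected_closed_ear_through:
  assumes tnc: "two_node_connected V E" and t: "t0 \<in> V" "t1 \<in> V" "t0 \<noteq> t1"
  shows "\<exists>C. closed_ear {t0} C \<and> hd C = t0 \<and> t1 \<in> set C \<and> set C \<subseteq> V \<and> walk_edges C \<subseteq> E"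
proof -
  obtain w where w: "{t0, w} \<in> E" "w \<in> V" "w \<noteq> t0" "w \<noteq> t1"
    using two_node_connected_neighbor[OF tnc t] by blast
  then obtain P where P: "ear_through V E {t0, w} t1 P"
    using ear_through_exists[OF tnc, of "{t0, w}" t0 w t1] t by auto
  have "\<exists>P'. ear_through V E {t0, w} t1 P' \<and> hd P' = t0 \<and> last P' = w"
  proof -
    have "hd P \<in> {t0, w}" "last P \<in> {t0, w}" "hd P \<noteq> last P"
      using P open_ear_hd_neq_last by (auto simp: ear_through_def open_ear_def)
    then consider "hd P = t0" "last P = w" | "hd P = w" "last P = t0" by fastforce
    then show ?thesis
      by cases (use P ear_through_rev[OF P] in \<open>auto simp: hd_rev last_rev\<close>)
  qed
  then obtain P' where P': "ear_through V E {t0, w} t1 P'" "hd P' = t0" "last P' = w" by blast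
  then obtain R where R: "P' = t0 # R"
    by (cases P') (auto simp: ear_through_def open_ear_def)
  have "distinct P'" "{t0, w, t1} \<subseteq> set P'" "set P' \<subseteq> V" "walk_edges P' \<subseteq> E"
    using P' R by (auto simp: ear_through_def open_ear_def)
  then have "card {t0, w, t1} \<le> length P'"
    using card_mono[OF finite_set] distinct_card by metis
  then have "length R \<ge> 2" using w t R by simp
  have "walk_edges (P' @ [t0]) = insert {w, t0} (walk_edges P')"
    using walk_edges_snoc[of P' t0] P'(3) R by simp
  then have "walk_edges (t0 # R @ [t0]) \<subseteq> E"
    using \<open>walk_edges P' \<subseteq> E\<close> R w(1) by (simp add: insert_commute)
  moreover have "closed_ear {t0} (t0 # R @ [t0])"
    using \<open>length R \<ge> 2\<close> \<open>distinct P'\<close> R by (simp add: closed_ear_def)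
  ultimately show ?thesis
    using \<open>{t0, w, t1} \<subseteq> set P'\<close> \<open>set P' \<subseteq> V\<close> R by (intro exI[of _ "t0 # R @ [t0]"]) auto
qed

text \<open>The two-node-connectivity of the covered subgraph, implied by the decomposition anyway,
  is carried along because the minimality of the graph is applied to it.\<close>
definition partial_terminal_ear_decomposition ::
    "'a set \<Rightarrow> 'a set set \<Rightarrow> 'a set \<Rightarrow> 'a list list \<Rightarrow> bool" where
  "partial_terminal_ear_decomposition V E T Ps \<longleftrightarrow>
     open_ear_decomposition (ear_verts Ps (length Ps)) (ear_edges Ps) Ps
     \<and> hd (Ps ! 0) \<in> T \<and> (\<forall>i\<in>{1..<length Ps}. ear_int Ps i \<inter> T \<noteq> {})
     \<and> ear_verts Ps (length Ps) \<subseteq> V \<and> ear_edges Ps \<subseteq> E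
     \<and> two_node_connected (ear_verts Ps (length Ps)) (ear_edges Ps)"

lemma partial_terminal_ear_decomposition_init:
  assumes C: "closed_ear {t0} C" "hd C = t0" "set C \<subseteq> V" "walk_edges C \<subseteq> E"
    and T: "t0 \<in> T" "t1 \<in> T" "t1 \<in> set C" "t1 \<noteq> t0"
  shows "partial_terminal_ear_decomposition V E T [[t0], C]"
proof -
  let ?Ps = "[[t0], C]"
  have "set C \<inter> {t0} = {hd C}" using C(1) by (simp add: closed_ear_def)
  then have "t0 \<in> set C" using C(2) by blast
  have lt2: "{..<length ?Ps} = {0, 1}" by auto
  have verts: "ear_verts ?Ps 1 = {t0}" "ear_verts ?Ps (length ?Ps) = set C"
    using \<open>t0 \<in> set C\<close> unfolding ear_verts_def lt2 by auto
  have edges: "ear_edges ?Ps = walk_edges C"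
    unfolding ear_edges_def lt2 by simp
  have "open_ear_decomposition (set C) (walk_edges C) ?Ps"
    unfolding open_ear_decomposition_def ear_decomposition_def
  proof (intro conjI)
    show "\<forall>i<length ?Ps. \<forall>j<length ?Ps. i \<noteq> j \<longrightarrow> walk_edges (?Ps ! i) \<inter> walk_edges (?Ps ! j) = {}"
      by (simp add: less_Suc_eq)
    show "(\<Union>i<length ?Ps. walk_edges (?Ps ! i)) = walk_edges C"
      using edges by (simp add: ear_edges_def)
    show "(\<Union>i<length ?Ps. set (?Ps ! i)) = set C"
      using verts by (simp add: ear_verts_def)
  qed (use C(1) verts(1) in \<open>simp_all add: numeral_2_eq_2\<close>)
  moreover have "two_node_connected (set C) (walk_edges C)"
    using C(1) by (intro two_node_connected_cycle) (auto simp: closed_ear_def)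
  moreover have "ear_int ?Ps 1 \<inter> T \<noteq> {}"
    using T verts(1) by (auto simp: ear_int_def)
  ultimately show ?thesis
    unfolding partial_terminal_ear_decomposition_def verts edges
    using C(3,4) T(1) by simp
qed

lemma partial_terminal_ear_decomposition_snoc:
  assumes D: "partial_terminal_ear_decomposition V E T Ps"
    and P: "ear_through V E (ear_verts Ps (length Ps)) t P"
    and t: "t \<in> T" "t \<notin> ear_verts Ps (length Ps)"
  shows "partial_terminal_ear_decomposition V E T (Ps @ [P])"
proof -
  let ?W = "ear_verts Ps (length Ps)"
  have ear: "open_ear ?W P" "set P \<subseteq> V" "walk_edges P \<subseteq> E" "t \<in> set P"
    using P by (auto simp: ear_through_def)
  have dec: "open_ear_decomposition ?W (ear_edges Ps) Ps"
    and "length Ps \<ge> 2"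
    and terminals: "\<forall>i\<in>{1..<length Ps}. ear_int Ps i \<inter> T \<noteq> {}"
    using D by (simp_all add: partial_terminal_ear_decomposition_def open_ear_decomposition_def)
  have "open_ear_decomposition (ear_verts (Ps @ [P]) (length (Ps @ [P]))) (ear_edges (Ps @ [P])) (Ps @ [P])"
    using open_ear_edge_not_subset[OF ear(1,4) t(2)] by (intro open_ear_decomposition_snoc[OF dec ear(1)]) blast
  moreover have "\<forall>i\<in>{1..<length (Ps @ [P])}. ear_int (Ps @ [P]) i \<inter> T \<noteq> {}"
  proof
    fix i assume "i \<in> {1..<length (Ps @ [P])}"
    then consider "i \<in> {1..<length Ps}" | "i = length Ps" by fastforce
    then show "ear_int (Ps @ [P]) i \<inter> T \<noteq> {}"
    proof cases
      case 2
      then have "t \<in> ear_int (Ps @ [P]) i \<inter> T" using ear(4) t by (simp add: ear_int_snoc)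
      then show ?thesis by blast
    qed (use terminals in \<open>simp add: ear_int_snoc_less\<close>)
  qed
  moreover have "two_node_connected (?W \<union> set P) (ear_edges Ps \<union> walk_edges P)"
    using D ear(1) by (intro two_node_connected_add_ear) (simp_all add: partial_terminal_ear_decomposition_def)
  ultimately show ?thesis
    using D ear \<open>length Ps \<ge> 2\<close>
    by (auto simp: partial_terminal_ear_decomposition_def ear_verts_snoc ear_edges_snoc nth_append)
qed

lemma partial_terminal_ear_decomposition_covering:
  assumes tnc: "two_node_connected V E" and T: "T \<subseteq> V" "finite T"
    and D: "partial_terminal_ear_decomposition V E T Ps"
  shows "\<exists>Ps'. partial_terminal_ear_decomposition V E T Ps' \<and> T \<subseteq> ear_verts Ps' (length Ps')"
  using D
proof (induction "card (T - ear_verts Ps (length Ps))" arbitrary: Ps rule: less_induct)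
  case less
  let ?W = "ear_verts Ps (length Ps)"
  show ?case
  proof (cases "T \<subseteq> ?W")
    case False
    then obtain t where t: "t \<in> T" "t \<notin> ?W" by blast
    have W: "?W \<subseteq> V" "card ?W > 2"
      using less.prems by (simp_all add: partial_terminal_ear_decomposition_def two_node_connected_def)
    then obtain x1 where "x1 \<in> ?W" by fastforce
    moreover obtain x2 where "x2 \<in> ?W" "x2 \<noteq> x1" using card_gt_2_obtain_third[OF W(2)] by metis
    ultimately obtain P where P: "ear_through V E ?W t P"
      using ear_through_exists[OF tnc W(1)] t T(1) by blast
    then have D': "partial_terminal_ear_decomposition V E T (Ps @ [P])"
      using partial_terminal_ear_decomposition_snoc[OF less.prems] t by blast
    have "t \<in> set P" using P by (simp add: ear_through_def)
    then have "T - ear_verts (Ps @ [P]) (length (Ps @ [P])) \<subset> T - ?W"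
      using t by (auto simp: ear_verts_snoc)
    then have "card (T - ear_verts (Ps @ [P]) (length (Ps @ [P]))) < card (T - ?W)"
      using T(2) by (meson finite_Diff psubset_card_mono)
    then show ?thesis using less.hyps D' by blast
  qed (use less.prems in blast)
qed

lemma partial_terminal_ear_decomposition_spanning:
  assumes tnc: "two_node_connected V E" and D: "partial_terminal_ear_decomposition V E T Ps"
    and T: "T \<subseteq> ear_verts Ps (length Ps)"
    and minimal: "\<forall>V' E'. subgraph V' E' V E \<and> E' \<subset> E \<and> T \<subseteq> V' \<longrightarrow> \<not> two_node_connected V' E'"
  shows "open_ear_decomposition V E Ps"
proof -
  let ?W = "ear_verts Ps (length Ps)"
  have dec: "open_ear_decomposition ?W (ear_edges Ps) Ps"
    and W: "?W \<subseteq> V" "ear_edges Ps \<subseteq> E" "two_node_connected ?W (ear_edges Ps)"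
    using D by (simp_all add: partial_terminal_ear_decomposition_def)
  have "subgraph ?W (ear_edges Ps) V E"
    unfolding subgraph_def using W(1,2) ear_edge_subset_ear_verts[of _ Ps] by blast
  then have edges: "ear_edges Ps = E" using minimal W T by blast
  have "V \<subseteq> ?W"
  proof
    fix v assume "v \<in> V"
    obtain u where "u \<in> V" "u \<noteq> v"
      using tnc card_gt_2_obtain_third[of V v v] by (auto simp: two_node_connected_def)
    then obtain z where "{v, z} \<in> E"
      using two_node_connected_neighbor[OF tnc \<open>v \<in> V\<close>] by metis
    then show "v \<in> ?W" using ear_edge_subset_ear_verts edges by blast
  qed
  then show ?thesis using dec edges W(1) by simp
qed

lemma minimal_two_node_connected_terminal_ear_decomposition:
  assumes tnc: "two_node_connected V E" and T: "T \<subseteq> V" "finite T" "card T \<ge> 2"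
    and minimal: "\<forall>V' E'. subgraph V' E' V E \<and> E' \<subset> E \<and> T \<subseteq> V' \<longrightarrow> \<not> two_node_connected V' E'"
  shows "\<exists>Ps. open_ear_decomposition V E Ps \<and> hd (Ps ! 0) \<in> T
           \<and> (\<forall>i\<in>{1..<length Ps}. ear_int Ps i \<inter> T \<noteq> {})"
proof -
  obtain t0 t1 where t: "t0 \<in> T" "t1 \<in> T" "t0 \<noteq> t1"
    using T(2,3) card_le_Suc0_iff_eq[of T] by auto
  then obtain C where "closed_ear {t0} C" "hd C = t0" "t1 \<in> set C" "set C \<subseteq> V" "walk_edges C \<subseteq> E"
    using two_node_connected_closed_ear_through[OF tnc] T(1) by blast
  then have "partial_terminal_ear_decomposition V E T [[t0], C]"
    using partial_terminal_ear_decomposition_init t by metis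
  then obtain Ps where D: "partial_terminal_ear_decomposition V E T Ps" "T \<subseteq> ear_verts Ps (length Ps)"
    using partial_terminal_ear_decomposition_covering[OF tnc T(1,2)] by blast
  then show ?thesis
    using partial_terminal_ear_decomposition_spanning[OF tnc D minimal]
    by (auto simp: partial_terminal_ear_decomposition_def)
qed

section \<open>Counting ears and nodes of degree at least 3\<close>

lemma ear_decomposition_length_le_card:
  assumes D: "ear_decomposition V E Ps" and T: "finite T" "hd (Ps ! 0) \<in> T"
    and terminals: "\<forall>i\<in>{1..<length Ps}. ear_int Ps i \<inter> T \<noteq> {}"
  shows "length Ps \<le> card T"
proof -
  define f where "f i = (if i = 0 then hd (Ps ! 0) else (SOME t. t \<in> ear_int Ps i \<inter> T))" for i
  have f: "f i \<in> T \<and> f i \<in> set (Ps ! i) \<and> (i \<noteq> 0 \<longrightarrow> f i \<notin> ear_verts Ps i)"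
    if "i < length Ps" for i
  proof (cases "i = 0")
    case True
    have "Ps ! 0 \<noteq> []" using D by (auto simp: ear_decomposition_def)
    then show ?thesis using True T(2) by (simp add: f_def)
  next
    case False
    then have "\<exists>t. t \<in> ear_int Ps i \<inter> T" using terminals that by auto
    then have "f i \<in> ear_int Ps i \<inter> T" unfolding f_def using False by (metis someI_ex)
    then show ?thesis using False by (simp add: ear_int_def)
  qed
  have "inj_on f {..<length Ps}"
  proof (rule linorder_inj_onI)
    fix i j assume "i < j" "j \<in> {..<length Ps}"
    then show "f i \<noteq> f j" using f[of i] f[of j] set_subset_ear_verts[of i j Ps] by auto
  qed auto
  moreover have "f ` {..<length Ps} \<subseteq> T" using f by auto
  ultimately show ?thesis using card_inj_on_le[OF _ _ T(1)] by fastforce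
qed

lemma card_nth_eq_le_1: "distinct xs \<Longrightarrow> card {k. k < length xs \<and> xs ! k = v} \<le> 1"
  by (auto simp: card_le_Suc0_iff_eq nth_eq_iff_index_eq)

lemma card_walk_edges_at_le_2:
  assumes "distinct (butlast P)" "distinct (tl P)"
  shows "card {e \<in> walk_edges P. v \<in> e} \<le> 2"
proof -
  let ?K1 = "{k. k < length (butlast P) \<and> butlast P ! k = v}"
    and ?K2 = "{k. k < length (tl P) \<and> tl P ! k = v}"
  have "{e \<in> walk_edges P. v \<in> e} \<subseteq> (\<lambda>k. {P ! k, P ! Suc k}) ` (?K1 \<union> ?K2)"
    by (auto simp: walk_edges_def nth_butlast nth_tl)
  then have "card {e \<in> walk_edges P. v \<in> e} \<le> card ((\<lambda>k. {P ! k, P ! Suc k}) ` (?K1 \<union> ?K2))"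
    by (intro card_mono) simp_all
  also have "\<dots> \<le> card (?K1 \<union> ?K2)" by (rule card_image_le) simp
  also have "\<dots> \<le> card ?K1 + card ?K2" by (rule card_Un_le)
  also have "\<dots> \<le> 1 + 1"
    using card_nth_eq_le_1[OF assms(1), of v] card_nth_eq_le_1[OF assms(2), of v] by (rule add_mono)
  finally show ?thesis by simp
qed

lemma closed_ear_distinct_butlast:
  assumes "closed_ear W P"
  shows "distinct (butlast P)"
proof -
  have P: "length P \<ge> 2" "hd P = last P" "distinct (tl P)"
    using assms by (simp_all add: closed_ear_def)
  obtain a m b where "P = a # m @ [b]" using P(1) by (rule length_ge_2_obtain_hd_mid_last)
  then show ?thesis using P(2,3) by simp
qed

lemma open_ear_decomposition_ear_distinct:
  assumes D: "open_ear_decomposition V E Ps" and J: "1 \<le> J" "J < length Ps"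
  shows "distinct (butlast (Ps ! J)) \<and> distinct (tl (Ps ! J))"
proof -
  consider "J = 1" | "J \<in> {2..<length Ps}" using J by fastforce
  then show ?thesis
  proof cases
    case 1
    then have "closed_ear (ear_verts Ps J) (Ps ! J)" using D by (simp add: open_ear_decomposition_def)
    then show ?thesis using closed_ear_distinct_butlast by (simp add: closed_ear_def)
  next
    case 2
    then have "distinct (Ps ! J)" using D by (simp add: open_ear_decomposition_def open_ear_def)
    then show ?thesis by (simp add: distinct_butlast distinct_tl)
  qed
qed

text \<open>J is the first ear through the vertex, or the cycle if that is the trivial ear;
  any later ear through the vertex would have it as an end.\<close>
lemma open_ear_decomposition_edges_at_single_ear:
  assumes D: "open_ear_decomposition V E Ps" and v: "v \<in> V"
    and not_end: "\<forall>i\<in>{2..<length Ps}. v \<noteq> hd (Ps ! i) \<and> v \<noteq> last (Ps ! i)"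
  obtains J where "1 \<le> J" "J < length Ps" "{e \<in> E. v \<in> e} \<subseteq> walk_edges (Ps ! J)"
proof -
  have dec: "ear_decomposition V E Ps" and "length Ps \<ge> 2"
    and opens: "\<forall>i\<in>{2..<length Ps}. open_ear (ear_verts Ps i) (Ps ! i)"
    using D by (simp_all add: open_ear_decomposition_def)
  have "\<exists>j<length Ps. v \<in> set (Ps ! j)" using dec v by (auto simp: ear_decomposition_def)
  define j where "j = (LEAST j. j < length Ps \<and> v \<in> set (Ps ! j))"
  have j: "j < length Ps" "v \<in> set (Ps ! j)" "\<And>i. i < length Ps \<Longrightarrow> v \<in> set (Ps ! i) \<Longrightarrow> j \<le> i"
    using LeastI_ex[OF \<open>\<exists>j<length Ps. _\<close>] unfolding j_def by (auto intro: Least_le)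
  define J where "J = max 1 j"
  have "walk_edges (Ps ! 0) = {}" using dec by (auto simp: ear_decomposition_def length_Suc_conv)
  have "e \<in> walk_edges (Ps ! J)" if "e \<in> E" "v \<in> e" for e
  proof -
    obtain i where i: "i < length Ps" "e \<in> walk_edges (Ps ! i)"
      using dec \<open>e \<in> E\<close> by (auto simp: ear_decomposition_def)
    then have "v \<in> set (Ps ! i)" using \<open>v \<in> e\<close> walk_edge_subset_set by blast
    have "i \<noteq> 0" using i(2) \<open>walk_edges (Ps ! 0) = {}\<close> by (metis empty_iff)
    have "i = J"
    proof (rule ccontr)
      assume "i \<noteq> J"
      then have "j < i" "2 \<le> i" using j(3)[OF i(1) \<open>v \<in> set (Ps ! i)\<close>] \<open>i \<noteq> 0\<close> by (auto simp: J_def)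
      then have "v \<in> ear_verts Ps i" using set_subset_ear_verts[of j i Ps] j(2) by auto
      moreover have "open_ear (ear_verts Ps i) (Ps ! i)" using opens i(1) \<open>2 \<le> i\<close> by simp
      ultimately have "v = hd (Ps ! i) \<or> v = last (Ps ! i)"
        using \<open>v \<in> set (Ps ! i)\<close> by (simp add: open_ear_iff)
      then show False using not_end i(1) \<open>2 \<le> i\<close> by auto
    qed
    then show ?thesis using i by simp
  qed
  moreover have "1 \<le> J" "J < length Ps" using j(1) \<open>length Ps \<ge> 2\<close> by (auto simp: J_def)
  ultimately show ?thesis using that by blast
qed

lemma open_ear_decomposition_degree_le_2:
  assumes D: "open_ear_decomposition V E Ps" and v: "v \<in> V"
    and not_end: "\<forall>i\<in>{2..<length Ps}. v \<noteq> hd (Ps ! i) \<and> v \<noteq> last (Ps ! i)"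
  shows "degree E v \<le> 2"
proof -
  obtain J where J: "1 \<le> J" "J < length Ps" and edges: "{e \<in> E. v \<in> e} \<subseteq> walk_edges (Ps ! J)"
    using open_ear_decomposition_edges_at_single_ear[OF D v not_end] .
  have "degree E v \<le> card {e \<in> walk_edges (Ps ! J). v \<in> e}"
    unfolding degree_def using edges by (intro card_mono) (auto simp: finite_walk_edges)
  also have "\<dots> \<le> 2"
    using open_ear_decomposition_ear_distinct[OF D J] by (intro card_walk_edges_at_le_2) simp_all
  finally show ?thesis .
qed

lemma open_ear_decomposition_card_high_degree:
  assumes D: "open_ear_decomposition V E Ps"
  shows "card {v\<in>V. degree E v \<ge> 3} \<le> 2 * (length Ps - 2)"
proof -
  let ?I = "{2..<length Ps}"
  have "{v\<in>V. degree E v \<ge> 3} \<subseteq> (\<lambda>i. hd (Ps ! i)) ` ?I \<union> (\<lambda>i. last (Ps ! i)) ` ?I"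
    using open_ear_decomposition_degree_le_2[OF D] by fastforce
  then have "card {v\<in>V. degree E v \<ge> 3} \<le> card ((\<lambda>i. hd (Ps ! i)) ` ?I) + card ((\<lambda>i. last (Ps ! i)) ` ?I)"
    by (meson card_Un_le card_mono finite_UnI finite_atLeastLessThan finite_imageI le_trans)
  also have "\<dots> \<le> card ?I + card ?I" by (intro add_mono card_image_le) simp_all
  finally show ?thesis by simp
qed

theorem lemma4p1:
  fixes VG VH :: "'a set" and EG EH :: "'a set set" and T :: "'a set"
  assumes "graph VG EG"
    and "T \<subseteq> VG"
    and "card T \<ge> 2"
    and "subgraph VH EH VG EG"
    and "two_node_connected VH EH"
    and "T \<subseteq> VH"
    and "\<forall>V' E'. subgraph V' E' VH EH \<and> E' \<subset> EH \<and> T \<subseteq> V' \<longrightarrow> \<not> two_node_connected V' E'"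
  shows "\<exists>Ps. open_ear_decomposition VH EH Ps
           \<and> hd (Ps ! 0) \<in> T
           \<and> (\<forall>i\<in>{1..<length Ps}. ear_int Ps i \<inter> T \<noteq> {})
           \<and> card {v\<in>VH. degree EH v \<ge> 3} \<le> 2 * (card T - 2)"
proof -
  \<comment> \<open>G only contributes the finiteness of T.\<close>
  have "finite T" using assms(1,2) by (meson graph_def finite_subset)
  then obtain Ps where Ps: "open_ear_decomposition VH EH Ps" "hd (Ps ! 0) \<in> T"
      "\<forall>i\<in>{1..<length Ps}. ear_int Ps i \<inter> T \<noteq> {}"
    using minimal_two_node_connected_terminal_ear_decomposition[OF assms(5,6) _ assms(3,7)] by blast
  have "ear_decomposition VH EH Ps" using Ps(1) by (simp add: open_ear_decomposition_def)
  then have "length Ps \<le> card T" using ear_decomposition_length_le_card \<open>finite T\<close> Ps(2,3) by blast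
  then have "card {v\<in>VH. degree EH v \<ge> 3} \<le> 2 * (card T - 2)"
    using open_ear_decomposition_card_high_degree[OF Ps(1)] by linarith
  then show ?thesis using Ps by blast
qed

end
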